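(* Let $\Delta$ be the root system of a simple complex Lie algebra, with simple roots $\Pi$ and highest root $\theta$. Let $\alpha\in\Pi$ and let $i,j\ge 1$ be integers with $i+j\le\mathrm{ht}_\alpha(\theta)$. Then for any $\mu\in\Delta_\alpha(i)$ there is $\nu\in\Delta_\alpha(j)$ such that $\mu+\nu\in\Delta_\alpha(i+j)$ (in particular $\mu+\nu$ is a root).
   Context: For $\mu=\sum_{\beta\in\Pi}c_\beta\beta$, $\mathrm{ht}_\alpha(\mu)=c_\alpha$, and $\Delta_\alpha(i)=\{\gamma\in\Delta\mid\mathrm{ht}_\alpha(\gamma)=i\}$. *)

theory Defs
  imports "HOL-Analysis.Analysis"
begin

definition root_reflection :: "'a::euclidean_space \<Rightarrow> 'a \<Rightarrow> 'a" where
  "root_reflection \<alpha> \<beta> = \<beta> - (2 * (\<beta> \<bullet> \<alpha>) / (\<alpha> \<bullet> \<alpha>)) *\<^sub>R \<alpha>"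

definition root_system :: "'a::euclidean_space set \<Rightarrow> bool" where
  "root_system \<Delta> \<longleftrightarrow>
     finite \<Delta> \<and> 0 \<notin> \<Delta> \<and> span \<Delta> = UNIV \<and>
     (\<forall>\<alpha>\<in>\<Delta>. \<forall>\<beta>\<in>\<Delta>. root_reflection \<alpha> \<beta> \<in> \<Delta>) \<and>
     (\<forall>\<alpha>\<in>\<Delta>. \<forall>\<beta>\<in>\<Delta>. 2 * (\<beta> \<bullet> \<alpha>) / (\<alpha> \<bullet> \<alpha>) \<in> \<int>)"

definition reduced_root_system :: "'a::euclidean_space set \<Rightarrow> bool" where
  "reduced_root_system \<Delta> \<longleftrightarrow> root_system \<Delta> \<and>
     (\<forall>\<alpha>\<in>\<Delta>. \<forall>c::real. c *\<^sub>R \<alpha> \<in> \<Delta> \<longrightarrow> c = 1 \<or> c = -1)"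

definition irreducible_root_system :: "'a::euclidean_space set \<Rightarrow> bool" where
  "irreducible_root_system \<Delta> \<longleftrightarrow> root_system \<Delta> \<and>
     \<not> (\<exists>A B. A \<noteq> {} \<and> B \<noteq> {} \<and> A \<union> B = \<Delta> \<and> A \<inter> B = {} \<and>
            (\<forall>a\<in>A. \<forall>b\<in>B. a \<bullet> b = 0))"

text \<open>Root systems of simple complex Lie algebras = irreducible reduced root systems.\<close>
definition simple_lie_root_system :: "'a::euclidean_space set \<Rightarrow> bool" where
  "simple_lie_root_system \<Delta> \<longleftrightarrow> reduced_root_system \<Delta> \<and> irreducible_root_system \<Delta>"

definition root_base :: "'a::euclidean_space set \<Rightarrow> 'a set \<Rightarrow> bool" where
  "root_base \<Delta> S \<longleftrightarrow> S \<subseteq> \<Delta> \<and> independent S \<and>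
     (\<forall>\<beta>\<in>\<Delta>. \<exists>c::'a \<Rightarrow> int. \<beta> = (\<Sum>\<gamma>\<in>S. of_int (c \<gamma>) *\<^sub>R \<gamma>) \<and>
        ((\<forall>\<gamma>\<in>S. c \<gamma> \<ge> 0) \<or> (\<forall>\<gamma>\<in>S. c \<gamma> \<le> 0)))"

definition ht :: "'a::euclidean_space set \<Rightarrow> 'a \<Rightarrow> 'a \<Rightarrow> real" where
  "ht S \<alpha> \<mu> = real_vector.representation S \<mu> \<alpha>"

definition roots_of_height :: "'a::euclidean_space set \<Rightarrow> 'a set \<Rightarrow> 'a \<Rightarrow> int \<Rightarrow> 'a set" where
  "roots_of_height \<Delta> S \<alpha> i = {\<gamma>\<in>\<Delta>. ht S \<alpha> \<gamma> = of_int i}"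

definition highest_root :: "'a::euclidean_space set \<Rightarrow> 'a set \<Rightarrow> 'a \<Rightarrow> bool" where
  "highest_root \<Delta> S \<theta> \<longleftrightarrow> \<theta> \<in> \<Delta> \<and>
     (\<forall>\<beta>\<in>\<Delta>. \<forall>\<alpha>\<in>S. ht S \<alpha> \<beta> \<le> ht S \<alpha> \<theta>)"

end

theory Submission
  imports Defs
begin

text \<open>For \<open>k \<ge> 1\<close> the reflections in the simple roots other than \<open>\<alpha>\<close> permute
  \<open>\<Delta>\<^sub>\<alpha>(k)\<close>, so the sum \<open>\<rho>\<^sub>k\<close> of \<open>\<Delta>\<^sub>\<alpha>(k)\<close> is orthogonal to \<open>\<Pi> - {\<alpha>}\<close>. Hence
  \<open>x \<bullet> \<rho>\<^sub>k = ht\<^sub>\<alpha>(x) (\<alpha> \<bullet> \<rho>\<^sub>k)\<close> for every \<open>x\<close>, and since \<open>\<rho>\<^sub>k \<noteq> 0\<close> has positive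
  \<open>\<alpha>\<close>-height, \<open>\<alpha> \<bullet> \<rho>\<^sub>k > 0\<close>. So every root \<open>\<mu>\<close> of positive \<open>\<alpha>\<close>-height has positive
  inner product with some \<open>\<eta> \<in> \<Delta>\<^sub>\<alpha>(k)\<close>, and then \<open>\<eta> - \<mu>\<close> is a root, because in a reduced
  root system two distinct roots with positive inner product differ by a root.
  With \<open>k = i + j\<close> this gives \<open>\<nu> = \<eta> - \<mu>\<close>; that \<open>\<Delta>\<^sub>\<alpha>(i + j)\<close> is nonempty follows by
  descending from \<open>\<theta>\<close>, subtracting roots of \<open>\<alpha>\<close>-height 1 found in the same way.\<close>

lemma linear_root_reflection: "linear (root_reflection \<alpha>)"
  unfolding root_reflection_def
  by (rule linearI) (simp_all add: inner_add_left add_divide_distrib scaleR_add_left algebra_simps)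

lemma root_reflection_root_reflection:
  assumes "\<alpha> \<noteq> 0"
  shows "root_reflection \<alpha> (root_reflection \<alpha> \<beta>) = \<beta>"
proof -
  define c where "c = 2 * (\<beta> \<bullet> \<alpha>) / (\<alpha> \<bullet> \<alpha>)"
  have "(\<beta> - c *\<^sub>R \<alpha>) \<bullet> \<alpha> = - (\<beta> \<bullet> \<alpha>)"
    using assms by (simp add: c_def inner_diff_left field_simps)
  then show ?thesis
    unfolding root_reflection_def c_def[symmetric] by (simp add: c_def[symmetric] algebra_simps)
qed

lemma root_reflection_self:
  assumes "\<alpha> \<noteq> 0"
  shows "root_reflection \<alpha> \<alpha> = - \<alpha>"
  using assms by (simp add: root_reflection_def scaleR_2)

lemma root_reflection_eq_self_iff:
  assumes "\<alpha> \<noteq> 0"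
  shows "root_reflection \<alpha> \<beta> = \<beta> \<longleftrightarrow> \<beta> \<bullet> \<alpha> = 0"
  using assms by (simp add: root_reflection_def)

lemma root_system_nonzero: "root_system \<Delta> \<Longrightarrow> \<alpha> \<in> \<Delta> \<Longrightarrow> \<alpha> \<noteq> 0"
  unfolding root_system_def by auto

lemma root_system_reflection_mem:
  "root_system \<Delta> \<Longrightarrow> \<alpha> \<in> \<Delta> \<Longrightarrow> \<beta> \<in> \<Delta> \<Longrightarrow> root_reflection \<alpha> \<beta> \<in> \<Delta>"
  unfolding root_system_def by blast

lemma root_system_uminus_mem:
  assumes "root_system \<Delta>" and "\<alpha> \<in> \<Delta>"
  shows "- \<alpha> \<in> \<Delta>"
  using root_system_reflection_mem[OF assms assms(2)]
  by (simp add: root_reflection_self root_system_nonzero[OF assms])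

lemma root_system_cartan_integer:
  "root_system \<Delta> \<Longrightarrow> \<alpha> \<in> \<Delta> \<Longrightarrow> \<beta> \<in> \<Delta> \<Longrightarrow> 2 * (\<beta> \<bullet> \<alpha>) / (\<alpha> \<bullet> \<alpha>) \<in> \<int>"
  unfolding root_system_def by blast

lemma reduced_root_inner_less_norm_mult:
  assumes reduced: "reduced_root_system \<Delta>"
    and roots: "\<beta> \<in> \<Delta>" "\<gamma> \<in> \<Delta>" and "\<beta> \<noteq> \<gamma>"
  shows "\<beta> \<bullet> \<gamma> < norm \<beta> * norm \<gamma>"
proof -
  have nonzero: "\<beta> \<noteq> 0" "\<gamma> \<noteq> 0"
    using reduced roots root_system_nonzero unfolding reduced_root_system_def by blast+
  have "\<beta> \<bullet> \<gamma> \<noteq> norm \<beta> * norm \<gamma>"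
  proof
    assume "\<beta> \<bullet> \<gamma> = norm \<beta> * norm \<gamma>"
    then have "norm \<beta> *\<^sub>R \<gamma> = norm \<gamma> *\<^sub>R \<beta>"
      by (simp add: norm_cauchy_schwarz_eq)
    then have parallel: "\<gamma> = (norm \<gamma> / norm \<beta>) *\<^sub>R \<beta>"
      using nonzero by (metis divide_inverse_commute norm_eq_zero scaleR_scaleR
          left_inverse scaleR_one)
    then have "norm \<gamma> / norm \<beta> = 1 \<or> norm \<gamma> / norm \<beta> = -1"
      using reduced roots unfolding reduced_root_system_def by metis
    moreover have "norm \<gamma> / norm \<beta> > 0"
      using nonzero by simp
    ultimately have "norm \<gamma> / norm \<beta> = 1"
      by linarith
    then have "\<gamma> = \<beta>"
      using parallel by (metis scaleR_one)
    then show False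
      using \<open>\<beta> \<noteq> \<gamma>\<close> by simp
  qed
  then show ?thesis
    using norm_cauchy_schwarz[of \<beta> \<gamma>] by simp
qed

lemma reduced_root_cartan_integer_eq_one:
  assumes reduced: "reduced_root_system \<Delta>"
    and roots: "\<beta> \<in> \<Delta>" "\<gamma> \<in> \<Delta>" and "\<beta> \<noteq> \<gamma>" and pos: "\<beta> \<bullet> \<gamma> > 0"
  shows "2 * (\<beta> \<bullet> \<gamma>) / (\<gamma> \<bullet> \<gamma>) = 1 \<or> 2 * (\<gamma> \<bullet> \<beta>) / (\<beta> \<bullet> \<beta>) = 1"
proof -
  have rs: "root_system \<Delta>"
    using reduced by (simp add: reduced_root_system_def)
  have nonzero: "\<beta> \<noteq> 0" "\<gamma> \<noteq> 0"
    using rs roots by (auto simp: root_system_nonzero)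
  obtain a where a: "2 * (\<beta> \<bullet> \<gamma>) / (\<gamma> \<bullet> \<gamma>) = of_int a"
    using root_system_cartan_integer[OF rs roots(2,1)] Ints_cases by blast
  obtain e where e: "2 * (\<gamma> \<bullet> \<beta>) / (\<beta> \<bullet> \<beta>) = of_int e"
    using root_system_cartan_integer[OF rs roots] Ints_cases by blast
  have "real_of_int a > 0" "real_of_int e > 0"
    unfolding a[symmetric] e[symmetric] using pos nonzero by (simp_all add: inner_commute)
  then have "a > 0" "e > 0"
    by simp_all
  have "real_of_int (a * e) = (2 * (\<beta> \<bullet> \<gamma>) / (\<gamma> \<bullet> \<gamma>)) * (2 * (\<gamma> \<bullet> \<beta>) / (\<beta> \<bullet> \<beta>))"
    using a e by simp
  also have "\<dots> = 4 * (\<beta> \<bullet> \<gamma>)\<^sup>2 / ((\<beta> \<bullet> \<beta>) * (\<gamma> \<bullet> \<gamma>))"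
    by (simp add: inner_commute[of \<gamma> \<beta>] power2_eq_square)
  also have "\<dots> = 4 * (\<beta> \<bullet> \<gamma>)\<^sup>2 / (norm \<beta> * norm \<gamma>)\<^sup>2"
    by (simp add: power_mult_distrib power2_norm_eq_inner)
  also have "\<dots> < 4"
    using reduced_root_inner_less_norm_mult[OF assms(1-4)] pos nonzero
    by (simp add: power_strict_mono divide_less_eq)
  finally have "a * e < 4"
    by linarith
  moreover have "2 * 2 \<le> a * e" if "a \<ge> 2" "e \<ge> 2"
    using that by (intro mult_mono) simp_all
  ultimately have "a = 1 \<or> e = 1"
    using \<open>a > 0\<close> \<open>e > 0\<close> by linarith
  then show ?thesis
    using a e by auto
qed

lemma reduced_root_diff_mem:
  assumes reduced: "reduced_root_system \<Delta>"
    and roots: "\<beta> \<in> \<Delta>" "\<gamma> \<in> \<Delta>" and "\<beta> \<noteq> \<gamma>" and "\<beta> \<bullet> \<gamma> > 0"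
  shows "\<beta> - \<gamma> \<in> \<Delta>"
proof -
  have rs: "root_system \<Delta>"
    using reduced by (simp add: reduced_root_system_def)
  from reduced_root_cartan_integer_eq_one[OF assms] show ?thesis
  proof
    assume one: "2 * (\<beta> \<bullet> \<gamma>) / (\<gamma> \<bullet> \<gamma>) = 1"
    have "root_reflection \<gamma> \<beta> = \<beta> - \<gamma>"
      unfolding root_reflection_def one by simp
    then show ?thesis
      using root_system_reflection_mem[OF rs roots(2,1)] by simp
  next
    assume one: "2 * (\<gamma> \<bullet> \<beta>) / (\<beta> \<bullet> \<beta>) = 1"
    have "root_reflection \<beta> \<gamma> = \<gamma> - \<beta>"
      unfolding root_reflection_def one by simp
    then show ?thesis
      using root_system_uminus_mem[OF rs root_system_reflection_mem[OF rs roots]] by simp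
  qed
qed

locale based_root_system =
  fixes \<Delta> S :: "'a::euclidean_space set"
  assumes root_system: "root_system \<Delta>"
    and root_base: "root_base \<Delta> S"
begin

lemma simple_roots_subset: "S \<subseteq> \<Delta>"
  using root_base by (simp add: root_base_def)

lemma finite_roots: "finite \<Delta>"
  using root_system by (simp add: root_system_def)

lemma finite_simple_roots: "finite S"
  using finite_subset[OF simple_roots_subset finite_roots] .

lemma independent_simple_roots: "independent S"
  using root_base by (simp add: root_base_def)

lemma span_simple_roots: "span S = UNIV"
proof -
  have "\<Delta> \<subseteq> span S"
  proof
    fix \<beta> assume "\<beta> \<in> \<Delta>"
    then obtain c :: "'a \<Rightarrow> int" where "\<beta> = (\<Sum>\<gamma>\<in>S. of_int (c \<gamma>) *\<^sub>R \<gamma>)"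
      using root_base unfolding root_base_def by blast
    then show "\<beta> \<in> span S"
      by (simp add: span_sum span_scale span_base)
  qed
  then have "span \<Delta> \<subseteq> span S"
    by (simp add: span_minimal)
  then show ?thesis
    using root_system by (auto simp: root_system_def)
qed

lemma linear_ht: "linear (ht S \<alpha>)"
  by (rule linearI) (simp_all add: ht_def independent_simple_roots span_simple_roots
      real_vector.representation_add real_vector.representation_scale)

lemma ht_simple_root: "\<gamma> \<in> S \<Longrightarrow> ht S \<alpha> \<gamma> = (if \<alpha> = \<gamma> then 1 else 0)"
  by (simp add: ht_def real_vector.representation_basis independent_simple_roots)

lemma ht_root_in_Ints:
  assumes "\<beta> \<in> \<Delta>"
  shows "ht S \<alpha> \<beta> \<in> \<int>"
proof -
  obtain c :: "'a \<Rightarrow> int" where c: "\<beta> = (\<Sum>\<gamma>\<in>S. of_int (c \<gamma>) *\<^sub>R \<gamma>)"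
    using root_base assms unfolding root_base_def by blast
  have "ht S \<alpha> \<beta> = (\<Sum>\<gamma>\<in>S. if \<alpha> = \<gamma> then of_int (c \<gamma>) else 0)"
    unfolding c linear_sum[OF linear_ht] linear_cmul[OF linear_ht]
    by (intro sum.cong) (simp_all add: ht_simple_root)
  then show ?thesis
    by (simp add: finite_simple_roots)
qed

lemma inner_eq_ht_mult:
  assumes "\<alpha> \<in> S" and orthogonal: "\<And>\<gamma>. \<gamma> \<in> S \<Longrightarrow> \<gamma> \<noteq> \<alpha> \<Longrightarrow> \<rho> \<bullet> \<gamma> = 0"
  shows "x \<bullet> \<rho> = ht S \<alpha> x * (\<alpha> \<bullet> \<rho>)"
proof -
  have "x = (\<Sum>\<gamma>\<in>S. ht S \<gamma> x *\<^sub>R \<gamma>)"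
    by (simp add: ht_def real_vector.sum_representation_eq independent_simple_roots
        span_simple_roots finite_simple_roots)
  then have "x \<bullet> \<rho> = (\<Sum>\<gamma>\<in>S. ht S \<gamma> x * (\<gamma> \<bullet> \<rho>))"
    by (metis (no_types, lifting) inner_scaleR_left inner_sum_left sum.cong)
  also have "\<dots> = (\<Sum>\<gamma>\<in>S. if \<gamma> = \<alpha> then ht S \<alpha> x * (\<alpha> \<bullet> \<rho>) else 0)"
    using orthogonal by (intro sum.cong) (auto simp: inner_commute[of _ \<rho>])
  finally show ?thesis
    using assms(1) by (simp add: finite_simple_roots)
qed

lemma root_reflection_mem_roots_of_height:
  assumes "\<gamma> \<in> S" "\<gamma> \<noteq> \<alpha>" and "\<beta> \<in> roots_of_height \<Delta> S \<alpha> k"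
  shows "root_reflection \<gamma> \<beta> \<in> roots_of_height \<Delta> S \<alpha> k"
proof -
  have "ht S \<alpha> (root_reflection \<gamma> \<beta>) = ht S \<alpha> \<beta>"
    unfolding root_reflection_def linear_diff[OF linear_ht] linear_cmul[OF linear_ht]
    using assms(1,2) by (simp add: ht_simple_root)
  then show ?thesis
    using assms simple_roots_subset root_system_reflection_mem[OF root_system]
    by (auto simp: roots_of_height_def)
qed

lemma sum_roots_of_height_orthogonal:
  assumes "\<gamma> \<in> S" "\<gamma> \<noteq> \<alpha>"
  shows "\<Sum>(roots_of_height \<Delta> S \<alpha> k) \<bullet> \<gamma> = 0"
proof -
  let ?A = "roots_of_height \<Delta> S \<alpha> k"
  have "\<gamma> \<noteq> 0"
    using assms simple_roots_subset root_system_nonzero[OF root_system] by auto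
  then have involution: "root_reflection \<gamma> (root_reflection \<gamma> \<beta>) = \<beta>" for \<beta>
    by (rule root_reflection_root_reflection)
  have "root_reflection \<gamma> (\<Sum>?A) = (\<Sum>\<beta>\<in>?A. root_reflection \<gamma> \<beta>)"
    by (simp add: linear_sum[OF linear_root_reflection])
  also have "\<dots> = \<Sum>?A"
    by (rule sum.reindex_bij_witness[where i = "root_reflection \<gamma>" and j = "root_reflection \<gamma>"])
      (simp_all add: involution root_reflection_mem_roots_of_height assms)
  finally show ?thesis
    using \<open>\<gamma> \<noteq> 0\<close> root_reflection_eq_self_iff by blast
qed

lemma exists_root_of_height_inner_pos:
  assumes "\<alpha> \<in> S" and "k \<ge> 1" and nonempty: "roots_of_height \<Delta> S \<alpha> k \<noteq> {}"
    and "ht S \<alpha> \<mu> > 0"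
  shows "\<exists>\<eta>\<in>roots_of_height \<Delta> S \<alpha> k. \<mu> \<bullet> \<eta> > 0"
proof (rule ccontr)
  assume none: "\<not> ?thesis"
  let ?A = "roots_of_height \<Delta> S \<alpha> k"
  define \<rho> where "\<rho> = \<Sum>?A"
  have inner_\<rho>: "x \<bullet> \<rho> = ht S \<alpha> x * (\<alpha> \<bullet> \<rho>)" for x
    unfolding \<rho>_def by (rule inner_eq_ht_mult[OF assms(1) sum_roots_of_height_orthogonal])
  have "finite ?A"
    using finite_roots by (simp add: roots_of_height_def)
  have "ht S \<alpha> \<rho> = (\<Sum>\<beta>\<in>?A. ht S \<alpha> \<beta>)"
    by (simp add: \<rho>_def linear_sum[OF linear_ht])
  also have "\<dots> = (\<Sum>\<beta>\<in>?A. of_int k)"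
    by (intro sum.cong refl) (simp add: roots_of_height_def)
  also have "\<dots> = real (card ?A) * of_int k"
    by simp
  finally have "ht S \<alpha> \<rho> > 0"
    using \<open>finite ?A\<close> nonempty \<open>k \<ge> 1\<close> by (simp add: card_gt_0_iff)
  moreover from this have "\<rho> \<bullet> \<rho> > 0"
    using linear_0[OF linear_ht] by fastforce
  ultimately have "\<alpha> \<bullet> \<rho> > 0"
    using inner_\<rho>[of \<rho>] by (simp add: zero_less_mult_iff)
  then have "\<mu> \<bullet> \<rho> > 0"
    using inner_\<rho>[of \<mu>] \<open>ht S \<alpha> \<mu> > 0\<close> by simp
  moreover have "\<mu> \<bullet> \<rho> \<le> 0"
    unfolding \<rho>_def inner_sum_right using none by (intro sum_nonpos) (simp add: not_less)
  ultimately show False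
    by simp
qed

lemma roots_of_height_nonempty:
  assumes reduced: "reduced_root_system \<Delta>" and "\<alpha> \<in> S" and "\<theta> \<in> \<Delta>"
    and "1 \<le> m" and "of_int m \<le> ht S \<alpha> \<theta>"
  shows "roots_of_height \<Delta> S \<alpha> m \<noteq> {}"
proof -
  obtain K where K: "ht S \<alpha> \<theta> = of_int K"
    using ht_root_in_Ints[OF \<open>\<theta> \<in> \<Delta>\<close>] Ints_cases by blast
  have "\<alpha> \<in> roots_of_height \<Delta> S \<alpha> 1"
    using \<open>\<alpha> \<in> S\<close> simple_roots_subset by (auto simp: roots_of_height_def ht_simple_root)
  then have height_one: "roots_of_height \<Delta> S \<alpha> 1 \<noteq> {}"
    by blast
  have "m \<le> K"
    using assms(5) K by simp
  then show ?thesis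
    using \<open>1 \<le> m\<close>
  proof (induction m rule: int_le_induct)
    case base
    then show ?case
      using \<open>\<theta> \<in> \<Delta>\<close> K by (auto simp: roots_of_height_def)
  next
    case (step m)
    then obtain \<beta> where \<beta>: "\<beta> \<in> \<Delta>" "ht S \<alpha> \<beta> = of_int m"
      by (auto simp: roots_of_height_def)
    then obtain \<eta> where \<eta>: "\<eta> \<in> \<Delta>" "ht S \<alpha> \<eta> = 1" and "\<beta> \<bullet> \<eta> > 0"
      using exists_root_of_height_inner_pos[OF \<open>\<alpha> \<in> S\<close> _ height_one, of \<beta>] step.prems
      by (auto simp: roots_of_height_def)
    moreover have "\<beta> \<noteq> \<eta>"
      using \<beta> \<eta> step.prems by auto
    ultimately have "\<beta> - \<eta> \<in> \<Delta>"
      using reduced_root_diff_mem[OF reduced \<beta>(1)] by blast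
    moreover have "ht S \<alpha> (\<beta> - \<eta>) = of_int (m - 1)"
      using \<beta> \<eta> by (simp add: linear_diff[OF linear_ht])
    ultimately show ?case
      by (auto simp: roots_of_height_def)
  qed
qed

end

theorem corollary3p3:
  fixes \<Delta> S :: "'a::euclidean_space set" and \<theta> \<alpha> \<mu> :: 'a and i j :: int
  assumes "simple_lie_root_system \<Delta>"
    and "root_base \<Delta> S"
    and "highest_root \<Delta> S \<theta>"
    and "\<alpha> \<in> S"
    and "i \<ge> 1" and "j \<ge> 1"
    and "of_int (i + j) \<le> ht S \<alpha> \<theta>"
    and "\<mu> \<in> roots_of_height \<Delta> S \<alpha> i"
  shows "\<exists>\<nu> \<in> roots_of_height \<Delta> S \<alpha> j.
           \<mu> + \<nu> \<in> roots_of_height \<Delta> S \<alpha> (i + j)"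
proof -
  have reduced: "reduced_root_system \<Delta>"
    using assms(1) by (simp add: simple_lie_root_system_def)
  interpret based_root_system \<Delta> S
    using reduced assms(2) by unfold_locales (simp add: reduced_root_system_def)
  have "\<theta> \<in> \<Delta>"
    using assms(3) by (simp add: highest_root_def)
  then have "roots_of_height \<Delta> S \<alpha> (i + j) \<noteq> {}"
    using roots_of_height_nonempty[OF reduced assms(4) _ _ assms(7)] assms(5,6) by simp
  moreover have \<mu>: "\<mu> \<in> \<Delta>" "ht S \<alpha> \<mu> = of_int i"
    using assms(8) by (auto simp: roots_of_height_def)
  ultimately obtain \<eta> where \<eta>: "\<eta> \<in> \<Delta>" "ht S \<alpha> \<eta> = of_int (i + j)" and "\<mu> \<bullet> \<eta> > 0"
    using exists_root_of_height_inner_pos[OF assms(4), of "i + j" \<mu>] assms(5,6)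
    by (auto simp: roots_of_height_def)
  moreover have "\<eta> \<noteq> \<mu>"
    using \<eta> \<mu> assms(6) by auto
  ultimately have "\<eta> - \<mu> \<in> \<Delta>"
    using reduced_root_diff_mem[OF reduced \<eta>(1) \<mu>(1)] by (simp add: inner_commute)
  moreover have "ht S \<alpha> (\<eta> - \<mu>) = of_int j"
    using \<eta> \<mu> by (simp add: linear_diff[OF linear_ht])
  ultimately show ?thesis
    using \<eta> by (intro bexI[of _ "\<eta> - \<mu>"]) (auto simp: roots_of_height_def)
qed

end
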